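(* Let $\Omega$ be a topological space. Suppose either (a) $\mathcal{A}$ is an algebra of continuous real-valued functions on $\Omega$, closed in the compact-open topology and containing all constants; or (b) $\mathcal{B}$ is a complex algebra of continuous complex-valued functions on $\Omega$, closed in the compact-open topology and containing all constants, and $\mathcal{A}=\{\mathrm{Re}\,b\mid b\in\mathcal{B}\}$. Let $\mathcal{F}$ be the complete lattice cone generated by $\mathcal{A}$. Then for every compact $K\subset\Omega$ and every $C\geq1$, $$\mathrm{clConv}_{\mathcal{F}}K=\{\omega\in\Omega\mid a(\omega)\leq C\sup_K|a|\text{ for all }a\in\mathcal{A}\}.$$ Moreover, in case (b) these sets also coincide with $\{\omega\in\Omega\mid |b(\omega)|\leq C\sup_K|b|\text{ for all }b\in\mathcal{B}\}$.
   Context: The complete lattice cone generated by $\mathcal{A}$ is the smallest set of functions $\Omega\to(-\infty,\infty]$ containing $\mathcal{A}$, closed under nonnegative linear combinations and pointwise suprema of arbitrary families. $\mathrm{clConv}_{\mathcal{F}}K=\{\omega\in\Omega\mid f(\omega)\leq\sup f(K)\text{ for all }f\in\mathcal{F}\}$. The compact-open topology is given by the seminorms $\sup_K|\cdot|$, $K$ compact. *)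

theory Defs
  imports "HOL-Analysis.Analysis" "HOL-Library.Extended_Real"
begin

text \<open>Closedness of a set of continuous functions in the compact-open topology
  (topology of uniform convergence on compact sets, given by the seminorms
  sup over K of the absolute value, K compact).  A basic neighbourhood is given by
  one compact set (finite unions of compacts are compact) and one radius.\<close>
definition CO_closed :: "('a::topological_space \<Rightarrow> 'b::real_normed_vector) set \<Rightarrow> bool" where
  "CO_closed S \<longleftrightarrow>
     (\<forall>f. continuous_on UNIV f \<and>
          (\<forall>K. compact K \<longrightarrow> (\<forall>e>0. \<exists>g\<in>S. \<forall>x\<in>K. norm (f x - g x) < e))
          \<longrightarrow> f \<in> S)"

definition real_CO_algebra :: "('a::topological_space \<Rightarrow> real) set \<Rightarrow> bool" where
  "real_CO_algebra A \<longleftrightarrow>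
     (\<forall>f\<in>A. continuous_on UNIV f) \<and>
     (\<forall>f\<in>A. \<forall>g\<in>A. (\<lambda>x. f x + g x) \<in> A) \<and>
     (\<forall>f\<in>A. \<forall>g\<in>A. (\<lambda>x. f x * g x) \<in> A) \<and>
     (\<forall>c. \<forall>f\<in>A. (\<lambda>x. c * f x) \<in> A) \<and>
     (\<forall>c. (\<lambda>x. c) \<in> A) \<and>
     CO_closed A"

definition complex_CO_algebra :: "('a::topological_space \<Rightarrow> complex) set \<Rightarrow> bool" where
  "complex_CO_algebra B \<longleftrightarrow>
     (\<forall>f\<in>B. continuous_on UNIV f) \<and>
     (\<forall>f\<in>B. \<forall>g\<in>B. (\<lambda>x. f x + g x) \<in> B) \<and>
     (\<forall>f\<in>B. \<forall>g\<in>B. (\<lambda>x. f x * g x) \<in> B) \<and>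
     (\<forall>c. \<forall>f\<in>B. (\<lambda>x. c * f x) \<in> B) \<and>
     (\<forall>c. (\<lambda>x. c) \<in> B) \<and>
     CO_closed B"

text \<open>The complete lattice cone generated by A: smallest set of functions into
  (-\<infinity>,\<infinity>] (represented in ereal; -\<infinity> is never attained) containing A, closed under
  nonnegative linear combinations and pointwise suprema of (nonempty) families.\<close>
inductive_set lattice_cone :: "('a \<Rightarrow> real) set \<Rightarrow> ('a \<Rightarrow> ereal) set"
  for A :: "('a \<Rightarrow> real) set" where
  base: "a \<in> A \<Longrightarrow> (\<lambda>x. ereal (a x)) \<in> lattice_cone A"
| lincomb: "f \<in> lattice_cone A \<Longrightarrow> g \<in> lattice_cone A \<Longrightarrow> c \<ge> 0 \<Longrightarrow> d \<ge> 0 \<Longrightarrow>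
     (\<lambda>x. ereal c * f x + ereal d * g x) \<in> lattice_cone A"
| sup: "S \<noteq> {} \<Longrightarrow> (\<And>f. f \<in> S \<Longrightarrow> f \<in> lattice_cone A) \<Longrightarrow>
     (\<lambda>x. SUP f\<in>S. f x) \<in> lattice_cone A"

definition clConv :: "('a \<Rightarrow> ereal) set \<Rightarrow> 'a set \<Rightarrow> 'a set" where
  "clConv F K = {\<omega>. \<forall>f\<in>F. f \<omega> \<le> (SUP k\<in>K. f k)}"

end

theory Submission
  imports Defs
begin

text \<open>Every element of the complete lattice cone generated by \<open>A\<close> is, at each point, the supremum
  of the elements of \<open>A\<close> lying below it; hence \<open>clConv\<close> of \<open>K\<close> is the \<open>A\<close>-convex hull
  \<open>{\<omega>. a \<omega> \<le> sup\<^sub>K a for all a \<in> A}\<close>, and each point of the hull trivially satisfies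
  \<open>a \<omega> \<le> C sup\<^sub>K |a|\<close>.
  Conversely, applying that bound to the powers \<open>a\<^sup>n\<close> (in the complex case to rotations of \<open>b\<^sup>n\<close>
  that are real and nonnegative at \<open>\<omega>\<close>) gives \<open>|a \<omega>|\<^sup>n \<le> C (sup\<^sub>K |a|)\<^sup>n\<close> for all \<open>n\<close>, i.e.
  the bound with \<open>C = 1\<close>.  Applied to \<open>a + R\<close> for a large real constant \<open>R\<close>, that bound forces
  \<open>a \<omega> \<le> sup\<^sub>K a\<close>, so \<open>\<omega>\<close> lies in the hull.\<close>

lemma ereal_le_mult_SUP_iff_upper_bounds:
  fixes g :: "'a \<Rightarrow> real"
  assumes "C > 0"
  shows "ereal y \<le> ereal C * (SUP k\<in>K. ereal (g k)) \<longleftrightarrow> (\<forall>M. (\<forall>k\<in>K. g k \<le> M) \<longrightarrow> y \<le> C * M)"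
proof (cases "SUP k\<in>K. ereal (g k)")
  case (real r)
  have "\<forall>k\<in>K. g k \<le> r"
    using SUP_upper[of _ K "\<lambda>k. ereal (g k)"] unfolding real by simp
  moreover have "C * r \<le> C * M" if "\<forall>k\<in>K. g k \<le> M" for M
  proof -
    have "ereal r \<le> ereal M" unfolding real[symmetric] using that by (simp add: SUP_least)
    then show ?thesis using \<open>C > 0\<close> by simp
  qed
  ultimately show ?thesis
    using real by (auto intro: order_trans)
next
  case PInf
  then have "\<not> (\<forall>k\<in>K. g k \<le> M)" for M
    using SUP_least[of K "\<lambda>k. ereal (g k)" "ereal M"] by auto
  with PInf \<open>C > 0\<close> show ?thesis by auto
next
  case MInf
  then have "K = {}"
    using SUP_upper[of _ K "\<lambda>k. ereal (g k)"] by auto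
  have "\<not> y \<le> C * ((y - 1) / C)" using \<open>C > 0\<close> by simp
  then have "\<not> (\<forall>M. (\<forall>k\<in>K. g k \<le> M) \<longrightarrow> y \<le> C * M)" using \<open>K = {}\<close> by blast
  moreover have "\<not> ereal y \<le> ereal C * (SUP k\<in>K. ereal (g k))" using MInf \<open>C > 0\<close> by simp
  ultimately show ?thesis by blast
qed

text \<open>The clause \<open>f \<omega> \<noteq> -\<infinity>\<close> is needed for sums: in \<open>ereal\<close>, \<open>-\<infinity> + \<infinity> = \<infinity>\<close>.\<close>
definition approx_from_below :: "('a \<Rightarrow> real) set \<Rightarrow> ('a \<Rightarrow> ereal) \<Rightarrow> 'a \<Rightarrow> bool" where
  "approx_from_below A f \<omega> \<longleftrightarrow> f \<omega> \<noteq> -\<infinity> \<and>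
     (\<forall>x. ereal x < f \<omega> \<longrightarrow> (\<exists>a\<in>A. (\<forall>y. ereal (a y) \<le> f y) \<and> x \<le> a \<omega>))"

lemma approx_from_below_real:
  "a \<in> A \<Longrightarrow> approx_from_below A (\<lambda>x. ereal (a x)) \<omega>"
  unfolding approx_from_below_def by force

lemma approx_from_below_scale:
  assumes smul: "\<forall>c. \<forall>f\<in>A. (\<lambda>x. c * f x) \<in> A" and const: "\<forall>c. (\<lambda>x. c) \<in> A"
    and "c \<ge> 0" and f: "approx_from_below A f \<omega>"
  shows "approx_from_below A (\<lambda>x. ereal c * f x) \<omega>"
  unfolding approx_from_below_def
proof (intro conjI allI impI)
  show "ereal c * f \<omega> \<noteq> -\<infinity>"
    using f \<open>c \<ge> 0\<close> unfolding approx_from_below_def by (cases "f \<omega>") auto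
next
  fix x assume x: "ereal x < ereal c * f \<omega>"
  show "\<exists>a\<in>A. (\<forall>y. ereal (a y) \<le> ereal c * f y) \<and> x \<le> a \<omega>"
  proof (cases "c = 0")
    case True
    with x const show ?thesis by (intro bexI[of _ "\<lambda>_. x"]) (auto simp: zero_ereal_def[symmetric])
  next
    case False
    with \<open>c \<ge> 0\<close> have "c > 0" by simp
    with x have "ereal (x / c) < f \<omega>"
      by (cases "f \<omega>") (auto simp: field_simps)
    with f obtain a where a: "a \<in> A" "\<forall>y. ereal (a y) \<le> f y" "x / c \<le> a \<omega>"
      unfolding approx_from_below_def by blast
    have "ereal (c * a y) \<le> ereal c * f y" for y
      using ereal_mult_left_mono[OF a(2)[rule_format, of y], of "ereal c"] \<open>c > 0\<close> by simp
    moreover have "x \<le> c * a \<omega>" using a(3) \<open>c > 0\<close> by (simp add: field_simps)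
    ultimately show ?thesis using smul a(1) by (intro bexI[of _ "\<lambda>y. c * a y"]) auto
  qed
qed

lemma ereal_less_add_split:
  assumes "u \<noteq> -\<infinity>" "v \<noteq> -\<infinity>" "ereal x < u + v"
  obtains x1 x2 where "ereal x1 < u" "ereal x2 < v" "x = x1 + x2"
proof -
  obtain x2 where "ereal x2 < v" "ereal (x - x2) < u"
  proof (cases u)
    case (real r)
    then show ?thesis
    proof (cases v)
      case (real t)
      with \<open>u = ereal r\<close> assms(3) show ?thesis
        by (intro that[of "t - (r + t - x) / 2"]) (auto simp: field_simps)
    next
      case PInf
      with \<open>u = ereal r\<close> show ?thesis by (intro that[of "x - r + 1"]) auto
    qed (use assms in auto)
  next
    case PInf
    have "\<exists>t. ereal t < v" using assms(2) by (cases v) (auto simp: lt_ex)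
    then obtain t where "ereal t < v" ..
    with PInf show ?thesis by (intro that[of t]) auto
  qed (use assms in auto)
  then show ?thesis by (intro that[of "x - x2" x2]) auto
qed

lemma approx_from_below_add:
  assumes add: "\<forall>f\<in>A. \<forall>g\<in>A. (\<lambda>x. f x + g x) \<in> A"
    and f: "approx_from_below A f \<omega>" and g: "approx_from_below A g \<omega>"
  shows "approx_from_below A (\<lambda>x. f x + g x) \<omega>"
  unfolding approx_from_below_def
proof (intro conjI allI impI)
  have "f \<omega> \<noteq> -\<infinity>" "g \<omega> \<noteq> -\<infinity>" using f g unfolding approx_from_below_def by auto
  then show "f \<omega> + g \<omega> \<noteq> -\<infinity>" by simp
  fix x assume "ereal x < f \<omega> + g \<omega>"
  with \<open>f \<omega> \<noteq> -\<infinity>\<close> \<open>g \<omega> \<noteq> -\<infinity>\<close>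
  obtain x1 x2 where x: "ereal x1 < f \<omega>" "ereal x2 < g \<omega>" "x = x1 + x2"
    by (rule ereal_less_add_split)
  obtain a1 where a1: "a1 \<in> A" "\<forall>y. ereal (a1 y) \<le> f y" "x1 \<le> a1 \<omega>"
    using f x(1) unfolding approx_from_below_def by blast
  obtain a2 where a2: "a2 \<in> A" "\<forall>y. ereal (a2 y) \<le> g y" "x2 \<le> a2 \<omega>"
    using g x(2) unfolding approx_from_below_def by blast
  have "ereal (a1 y + a2 y) \<le> f y + g y" for y
    using add_mono[OF a1(2)[rule_format] a2(2)[rule_format]] by simp
  moreover have "x \<le> a1 \<omega> + a2 \<omega>" using x(3) a1(3) a2(3) by simp
  ultimately show "\<exists>a\<in>A. (\<forall>y. ereal (a y) \<le> f y + g y) \<and> x \<le> a \<omega>"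
    using add a1(1) a2(1) by (intro bexI[of _ "\<lambda>y. a1 y + a2 y"]) auto
qed

lemma approx_from_below_SUP:
  assumes "S \<noteq> {}" and S: "\<And>f. f \<in> S \<Longrightarrow> approx_from_below A f \<omega>"
  shows "approx_from_below A (\<lambda>x. SUP f\<in>S. f x) \<omega>"
  unfolding approx_from_below_def
proof (intro conjI allI impI)
  obtain f0 where "f0 \<in> S" using \<open>S \<noteq> {}\<close> by blast
  then have "f0 \<omega> \<le> (SUP f\<in>S. f \<omega>)" "f0 \<omega> \<noteq> -\<infinity>"
    using S unfolding approx_from_below_def by (auto intro: SUP_upper)
  then show "(SUP f\<in>S. f \<omega>) \<noteq> -\<infinity>" by auto
next
  fix x assume "ereal x < (SUP f\<in>S. f \<omega>)"
  then obtain f where f: "f \<in> S" "ereal x < f \<omega>" by (auto simp: less_SUP_iff)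
  then obtain a where a: "a \<in> A" "\<forall>y. ereal (a y) \<le> f y" "x \<le> a \<omega>"
    using S unfolding approx_from_below_def by blast
  have "\<forall>y. ereal (a y) \<le> (SUP f\<in>S. f y)"
    using a(2) f(1) by (meson SUP_upper order_trans)
  with a show "\<exists>a\<in>A. (\<forall>y. ereal (a y) \<le> (SUP f\<in>S. f y)) \<and> x \<le> a \<omega>" by blast
qed

lemma lattice_cone_approx_from_below:
  assumes "\<forall>f\<in>A. \<forall>g\<in>A. (\<lambda>x. f x + g x) \<in> A"
    and "\<forall>c. \<forall>f\<in>A. (\<lambda>x. c * f x) \<in> A" and "\<forall>c. (\<lambda>x. c) \<in> A"
    and "f \<in> lattice_cone A"
  shows "approx_from_below A f \<omega>"
  using assms(4)
proof induction
  case (lincomb f g c d)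
  then show ?case
    using assms(1-3) by (intro approx_from_below_add approx_from_below_scale) auto
qed (auto intro: approx_from_below_real approx_from_below_SUP)

lemma clConv_lattice_cone:
  assumes "\<forall>f\<in>A. \<forall>g\<in>A. (\<lambda>x. f x + g x) \<in> A"
    and "\<forall>c. \<forall>f\<in>A. (\<lambda>x. c * f x) \<in> A" and "\<forall>c. (\<lambda>x. c) \<in> A"
  shows "clConv (lattice_cone A) K = clConv ((\<lambda>a x. ereal (a x)) ` A) K"
proof
  show "clConv (lattice_cone A) K \<subseteq> clConv ((\<lambda>a x. ereal (a x)) ` A) K"
    unfolding clConv_def by (auto intro: lattice_cone.base)
next
  show "clConv ((\<lambda>a x. ereal (a x)) ` A) K \<subseteq> clConv (lattice_cone A) K"
    unfolding clConv_def
  proof (intro subsetI CollectI ballI)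
    fix \<omega> f
    assume \<omega>: "\<omega> \<in> {\<omega>. \<forall>f\<in>(\<lambda>a x. ereal (a x)) ` A. f \<omega> \<le> (SUP k\<in>K. f k)}"
      and "f \<in> lattice_cone A"
    have f: "approx_from_below A f \<omega>"
      by (rule lattice_cone_approx_from_below[OF assms \<open>f \<in> lattice_cone A\<close>])
    show "f \<omega> \<le> (SUP k\<in>K. f k)"
    proof (rule dense_le)
      fix y assume "y < f \<omega>"
      then obtain x where x: "y < ereal x" "ereal x < f \<omega>" using ereal_dense2 by blast
      with f obtain a where a: "a \<in> A" "\<forall>y. ereal (a y) \<le> f y" "x \<le> a \<omega>"
        unfolding approx_from_below_def by blast
      have "y \<le> ereal (a \<omega>)" using x(1) a(3) by (metis ereal_less_eq(3) less_imp_le order_trans)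
      also have "\<dots> \<le> (SUP k\<in>K. ereal (a k))" using \<omega> a(1) by auto
      also have "\<dots> \<le> (SUP k\<in>K. f k)" using a(2) by (intro SUP_mono') auto
      finally show "y \<le> (SUP k\<in>K. f k)" .
    qed
  qed
qed

lemma mem_clConv_real_iff:
  "\<omega> \<in> clConv ((\<lambda>a x. ereal (a x)) ` A) K \<longleftrightarrow> (\<forall>a\<in>A. \<forall>s. (\<forall>k\<in>K. a k \<le> s) \<longrightarrow> a \<omega> \<le> s)"
  by (simp add: clConv_def ereal_le_mult_SUP_iff_upper_bounds[of 1, simplified])

lemma upper_bounds_of_hull:
  fixes A :: "('a \<Rightarrow> real) set"
  assumes "(\<lambda>x. 0) \<in> A" and "C \<ge> 1" and hull: "\<forall>a\<in>A. \<forall>s. (\<forall>k\<in>K. a k \<le> s) \<longrightarrow> a \<omega> \<le> s"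
    and "a \<in> A" and aM: "\<forall>k\<in>K. \<bar>a k\<bar> \<le> M"
  shows "a \<omega> \<le> C * M"
proof -
  have "a \<omega> \<le> M" using hull \<open>a \<in> A\<close> aM by force
  moreover have "0 \<le> M" using hull[rule_format, OF \<open>(\<lambda>x. 0) \<in> A\<close>, of M] aM by force
  ultimately show ?thesis using \<open>C \<ge> 1\<close> by (metis mult_right_mono mult_1 order_trans)
qed

definition norm_dominated :: "('a \<Rightarrow> 'b::real_normed_vector) set \<Rightarrow> 'a set \<Rightarrow> real \<Rightarrow> 'a \<Rightarrow> bool" where
  "norm_dominated B K C \<omega> \<longleftrightarrow> (\<forall>b\<in>B. \<forall>M. (\<forall>k\<in>K. norm (b k) \<le> M) \<longrightarrow> norm (b \<omega>) \<le> C * M)"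

lemma norm_dominatedD:
  "norm_dominated B K C \<omega> \<Longrightarrow> b \<in> B \<Longrightarrow> (\<And>k. k \<in> K \<Longrightarrow> norm (b k) \<le> M) \<Longrightarrow> norm (b \<omega>) \<le> C * M"
  unfolding norm_dominated_def by blast

lemma bounded_powers_imp_le:
  fixes x C M :: real
  assumes "0 \<le> x" and pow: "\<And>n. x ^ n \<le> C * M ^ n"
  shows "x \<le> M"
proof (rule ccontr)
  assume "\<not> x \<le> M"
  have "C \<ge> 1" using pow[of 0] by simp
  show False
  proof (cases "M > 0")
    case True
    with \<open>\<not> x \<le> M\<close> have "1 < x / M" by simp
    then obtain n where "C < (x / M) ^ n" using real_arch_pow by blast
    moreover have "(x / M) ^ n \<le> C" using pow[of n] True by (simp add: power_divide pos_divide_le_eq)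
    ultimately show False by simp
  next
    case False
    then have "C * M \<le> 1 * M" using \<open>C \<ge> 1\<close> by (intro mult_right_mono_neg) auto
    with pow[of 1] \<open>\<not> x \<le> M\<close> show False by simp
  qed
qed

lemma power_closed:
  fixes B :: "('a \<Rightarrow> 'b::monoid_mult) set"
  assumes "\<forall>f\<in>B. \<forall>g\<in>B. (\<lambda>x. f x * g x) \<in> B" "(\<lambda>x. 1) \<in> B" "b \<in> B"
  shows "(\<lambda>x. b x ^ n) \<in> B"
proof (induction n)
  case (Suc n)
  then show ?case using assms(1,3) by (simp add: power_Suc2)
qed (simp add: assms(2))

lemma norm_dominated_imp_norm_dominated_1:
  fixes B :: "('a \<Rightarrow> 'b::real_normed_div_algebra) set"
  assumes "\<forall>f\<in>B. \<forall>g\<in>B. (\<lambda>x. f x * g x) \<in> B" "(\<lambda>x. 1) \<in> B"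
    and "norm_dominated B K C \<omega>"
  shows "norm_dominated B K 1 \<omega>"
  unfolding norm_dominated_def
proof (intro ballI allI impI)
  fix b M assume "b \<in> B" and bM: "\<forall>k\<in>K. norm (b k) \<le> M"
  have "norm (b \<omega>) ^ n \<le> C * M ^ n" for n
  proof -
    have "norm (b k ^ n) \<le> M ^ n" if "k \<in> K" for k
      using bM that by (simp add: norm_power power_mono)
    then have "norm (b \<omega> ^ n) \<le> C * M ^ n"
      by (rule norm_dominatedD[OF assms(3) power_closed[OF assms(1,2) \<open>b \<in> B\<close>]])
    then show ?thesis by (simp add: norm_power)
  qed
  from bounded_powers_imp_le[OF norm_ge_zero this] show "norm (b \<omega>) \<le> 1 * M" by simp
qed

lemma Re_le_by_real_shifts:
  fixes b :: "'a \<Rightarrow> complex"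
  assumes bM: "\<forall>k\<in>K. cmod (b k) \<le> M" and bs: "\<forall>k\<in>K. Re (b k) \<le> s"
    and shift: "\<And>t N. (\<forall>k\<in>K. cmod (b k + of_real t) \<le> N) \<Longrightarrow> cmod (b \<omega> + of_real t) \<le> N"
  shows "Re (b \<omega>) \<le> s"
proof (rule ccontr)
  assume "\<not> Re (b \<omega>) \<le> s"
  define \<delta> where "\<delta> = Re (b \<omega>) - s"
  have "\<delta> > 0" using \<open>\<not> Re (b \<omega>) \<le> s\<close> by (simp add: \<delta>_def)
  define M' where "M' = max M 0"
  define R where "R = M' + \<bar>s\<bar> + M'\<^sup>2 / \<delta> + 1"
  have "M' \<ge> 0" "M' + \<bar>s\<bar> \<le> R" using \<open>\<delta> > 0\<close> by (simp_all add: M'_def R_def)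
  have "\<delta> * R = \<delta> * (M' + \<bar>s\<bar> + 1) + M'\<^sup>2"
    using \<open>\<delta> > 0\<close> by (simp add: R_def field_simps)
  moreover have "\<delta> * (M' + \<bar>s\<bar> + 1) > 0" using \<open>\<delta> > 0\<close> \<open>M' \<ge> 0\<close> by simp
  ultimately have \<delta>R: "M'\<^sup>2 < \<delta> * R" by linarith
  \<comment> \<open>On \<open>K\<close> the shift lies in the box \<open>[0, R] \<times> [-M', M']\<close>; at \<open>\<omega>\<close> its real part is \<open>R + \<delta>\<close>.\<close>
  have "cmod (b k + of_real (R - s)) \<le> sqrt (R\<^sup>2 + M'\<^sup>2)" if "k \<in> K" for k
  proof -
    have "\<bar>Re (b k)\<bar> \<le> M'" "\<bar>Im (b k)\<bar> \<le> M'"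
      using bM that abs_Re_le_cmod abs_Im_le_cmod unfolding M'_def by (metis max.coboundedI1 order_trans)+
    moreover have "Re (b k) \<le> s" using bs that by blast
    ultimately have "(Re (b k) + (R - s))\<^sup>2 \<le> R\<^sup>2" "(Im (b k))\<^sup>2 \<le> M'\<^sup>2"
      using \<open>M' + \<bar>s\<bar> \<le> R\<close> by (auto intro!: power_mono simp: abs_le_square_iff[symmetric])
    then show ?thesis
      by (simp add: cmod_def real_sqrt_le_mono)
  qed
  then have "cmod (b \<omega> + of_real (R - s)) \<le> sqrt (R\<^sup>2 + M'\<^sup>2)" using shift by blast
  moreover have "\<delta> + R \<le> cmod (b \<omega> + of_real (R - s))"
    using complex_Re_le_cmod[of "b \<omega> + of_real (R - s)"] by (simp add: \<delta>_def)
  ultimately have "(\<delta> + R)\<^sup>2 \<le> (sqrt (R\<^sup>2 + M'\<^sup>2))\<^sup>2"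
    using \<open>\<delta> > 0\<close> \<open>M' \<ge> 0\<close> \<open>M' + \<bar>s\<bar> \<le> R\<close> by (intro power_mono) auto
  then have "\<delta>\<^sup>2 + 2 * (\<delta> * R) \<le> M'\<^sup>2" by (simp add: power2_sum)
  with \<delta>R show False by (smt (verit) zero_le_power2)
qed

lemma le_of_norm_dominated_real:
  fixes A :: "('a \<Rightarrow> real) set"
  assumes add: "\<forall>f\<in>A. \<forall>g\<in>A. (\<lambda>x. f x + g x) \<in> A" and const: "\<forall>c. (\<lambda>x. c) \<in> A"
    and dom: "norm_dominated A K 1 \<omega>" and "a \<in> A"
    and "\<forall>k\<in>K. \<bar>a k\<bar> \<le> M" and "\<forall>k\<in>K. a k \<le> s"
  shows "a \<omega> \<le> s"
proof -
  have "Re (of_real (a \<omega>)) \<le> s"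
  proof (rule Re_le_by_real_shifts[where b = "\<lambda>x. of_real (a x)" and K = K and M = M])
    fix t N assume "\<forall>k\<in>K. cmod (of_real (a k) + of_real t) \<le> N"
    then have "norm (a k + t) \<le> N" if "k \<in> K" for k
      using that by (simp flip: of_real_add)
    moreover have "(\<lambda>x. a x + t) \<in> A" using add[rule_format, OF \<open>a \<in> A\<close> const[rule_format, of t]] .
    ultimately have "norm (a \<omega> + t) \<le> 1 * N" using norm_dominatedD[OF dom, of "\<lambda>x. a x + t"] by simp
    then show "cmod (of_real (a \<omega>) + of_real t) \<le> N" by (simp flip: of_real_add)
  qed (use assms in auto)
  then show ?thesis by simp
qed

lemma Re_le_of_norm_dominated:
  fixes B :: "('a \<Rightarrow> complex) set"
  assumes add: "\<forall>f\<in>B. \<forall>g\<in>B. (\<lambda>x. f x + g x) \<in> B" and const: "\<forall>c. (\<lambda>x. c) \<in> B"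
    and dom: "norm_dominated B K 1 \<omega>" and "b \<in> B"
    and "\<forall>k\<in>K. cmod (b k) \<le> M" and "\<forall>k\<in>K. Re (b k) \<le> s"
  shows "Re (b \<omega>) \<le> s"
proof (rule Re_le_by_real_shifts[where K = K and M = M])
  fix t N assume "\<forall>k\<in>K. cmod (b k + of_real t) \<le> N"
  moreover have "(\<lambda>x. b x + of_real t) \<in> B" using add[rule_format, OF \<open>b \<in> B\<close> const[rule_format, of "of_real t"]] .
  ultimately show "cmod (b \<omega> + of_real t) \<le> N" using norm_dominatedD[OF dom, of "\<lambda>x. b x + of_real t"] by simp
qed (use assms in auto)

lemma norm_dominated_of_upper_bounds_real:
  fixes A :: "('a \<Rightarrow> real) set"
  assumes smul: "\<forall>c. \<forall>f\<in>A. (\<lambda>x. c * f x) \<in> A"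
    and H: "\<forall>a\<in>A. \<forall>M. (\<forall>k\<in>K. \<bar>a k\<bar> \<le> M) \<longrightarrow> a \<omega> \<le> C * M"
  shows "norm_dominated A K C \<omega>"
  unfolding norm_dominated_def real_norm_def
proof (intro ballI allI impI)
  fix a M assume "a \<in> A" and aM: "\<forall>k\<in>K. \<bar>a k\<bar> \<le> M"
  have "(\<lambda>x. - a x) \<in> A" using smul[rule_format, where c = "-1", OF \<open>a \<in> A\<close>] by simp
  then have "- a \<omega> \<le> C * M" using H[rule_format, of "\<lambda>x. - a x" M] aM by simp
  moreover have "a \<omega> \<le> C * M" using H[rule_format, OF \<open>a \<in> A\<close>] aM by blast
  ultimately show "\<bar>a \<omega>\<bar> \<le> C * M" by linarith
qed

lemma cnj_sgn_mult_self: "cnj (sgn z) * z = of_real (cmod z)"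
proof (cases "z = 0")
  case False
  have "cnj (sgn z) * z = cnj z * z / of_real (cmod z)"
    by (simp add: sgn_div_norm divide_inverse scaleR_conv_of_real)
  also have "\<dots> = of_real (cmod z)"
    using False by (simp add: mult.commute[of "cnj z"] complex_norm_square[symmetric] power2_eq_square)
  finally show ?thesis .
qed simp

lemma cmod_cnj_sgn_mult_le: "cmod (cnj (sgn z) * w) \<le> cmod w"
  by (cases "z = 0") (simp_all add: norm_mult norm_sgn)

lemma norm_dominated_of_Re_upper_bounds:
  fixes B :: "('a \<Rightarrow> complex) set"
  assumes smul: "\<forall>c. \<forall>f\<in>B. (\<lambda>x. c * f x) \<in> B"
    and H: "\<forall>b\<in>B. \<forall>M. (\<forall>k\<in>K. \<bar>Re (b k)\<bar> \<le> M) \<longrightarrow> Re (b \<omega>) \<le> C * M"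
  shows "norm_dominated B K C \<omega>"
  unfolding norm_dominated_def
proof (intro ballI allI impI)
  fix b M assume "b \<in> B" and bM: "\<forall>k\<in>K. cmod (b k) \<le> M"
  define c where "c = cnj (sgn (b \<omega>))"
  have "(\<lambda>x. c * b x) \<in> B" using smul[rule_format, OF \<open>b \<in> B\<close>] .
  moreover have "\<bar>Re (c * b k)\<bar> \<le> M" if "k \<in> K" for k
    using abs_Re_le_cmod[of "c * b k"] cmod_cnj_sgn_mult_le[of "b \<omega>" "b k"] bM that
    unfolding c_def by fastforce
  ultimately have "Re (c * b \<omega>) \<le> C * M" using H[rule_format, of "\<lambda>x. c * b x" M] by simp
  then show "cmod (b \<omega>) \<le> C * M" by (simp add: c_def cnj_sgn_mult_self)
qed

lemma Re_image_closed:
  fixes B :: "('a \<Rightarrow> complex) set"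
  assumes add: "\<forall>f\<in>B. \<forall>g\<in>B. (\<lambda>x. f x + g x) \<in> B"
    and smul: "\<forall>c. \<forall>f\<in>B. (\<lambda>x. c * f x) \<in> B" and const: "\<forall>c. (\<lambda>x. c) \<in> B"
  defines "A \<equiv> (\<lambda>b x. Re (b x)) ` B"
  shows "\<forall>f\<in>A. \<forall>g\<in>A. (\<lambda>x. f x + g x) \<in> A"
    and "\<forall>c. \<forall>f\<in>A. (\<lambda>x. c * f x) \<in> A"
    and "\<forall>c. (\<lambda>x. c) \<in> A"
proof (unfold A_def, safe)
  fix b1 b2 assume "b1 \<in> B" "b2 \<in> B"
  then show "(\<lambda>x. Re (b1 x) + Re (b2 x)) \<in> (\<lambda>b x. Re (b x)) ` B"
    using add by (intro image_eqI[of _ _ "\<lambda>x. b1 x + b2 x"]) auto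
next
  fix c b assume "b \<in> B"
  then show "(\<lambda>x. c * Re (b x)) \<in> (\<lambda>b x. Re (b x)) ` B"
    using smul by (intro image_eqI[of _ _ "\<lambda>x. of_real c * b x"]) auto
next
  fix c
  show "(\<lambda>x. c) \<in> (\<lambda>b x. Re (b x)) ` B"
    using const by (intro image_eqI[of _ _ "\<lambda>x. of_real c"]) auto
qed

lemma clConv_real_CO_algebra:
  fixes A :: "('a::topological_space \<Rightarrow> real) set"
  assumes "real_CO_algebra A" and "compact K" and "C \<ge> 1"
  shows "clConv (lattice_cone A) K =
           {\<omega>. \<forall>a\<in>A. ereal (a \<omega>) \<le> ereal C * (SUP k\<in>K. ereal \<bar>a k\<bar>)}"
proof -
  have cont: "\<forall>f\<in>A. continuous_on UNIV f"
    and add: "\<forall>f\<in>A. \<forall>g\<in>A. (\<lambda>x. f x + g x) \<in> A"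
    and mult: "\<forall>f\<in>A. \<forall>g\<in>A. (\<lambda>x. f x * g x) \<in> A"
    and smul: "\<forall>c. \<forall>f\<in>A. (\<lambda>x. c * f x) \<in> A"
    and const: "\<forall>c. (\<lambda>x. c) \<in> A"
    using assms(1) unfolding real_CO_algebra_def by auto
  have "\<omega> \<in> clConv (lattice_cone A) K \<longleftrightarrow> (\<forall>a\<in>A. \<forall>M. (\<forall>k\<in>K. \<bar>a k\<bar> \<le> M) \<longrightarrow> a \<omega> \<le> C * M)"
    (is "_ \<longleftrightarrow> ?bounds") for \<omega>
  proof -
    have "\<omega> \<in> clConv (lattice_cone A) K \<longleftrightarrow> (\<forall>a\<in>A. \<forall>s. (\<forall>k\<in>K. a k \<le> s) \<longrightarrow> a \<omega> \<le> s)"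
      (is "_ \<longleftrightarrow> ?hull")
      by (simp add: clConv_lattice_cone[OF add smul const] mem_clConv_real_iff)
    moreover have "?hull \<Longrightarrow> ?bounds"
      using upper_bounds_of_hull[of A C K \<omega>] const \<open>C \<ge> 1\<close> by blast
    moreover have "?hull" if ?bounds
    proof (intro ballI allI impI)
      fix a s assume "a \<in> A" and "\<forall>k\<in>K. a k \<le> s"
      obtain M where "\<forall>k\<in>K. \<bar>a k\<bar> \<le> M"
        using continuous_on_compact_bound[OF \<open>compact K\<close>] cont \<open>a \<in> A\<close>
        by (metis continuous_on_subset real_norm_def subset_UNIV)
      moreover have "norm_dominated A K 1 \<omega>"
        using norm_dominated_imp_norm_dominated_1[OF mult _
            norm_dominated_of_upper_bounds_real[OF smul that]] const by blast
      ultimately show "a \<omega> \<le> s"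
        using le_of_norm_dominated_real[OF add const _ \<open>a \<in> A\<close> _ \<open>\<forall>k\<in>K. a k \<le> s\<close>] by blast
    qed
    ultimately show ?thesis by blast
  qed
  then show ?thesis
    using \<open>C \<ge> 1\<close> by (auto simp: ereal_le_mult_SUP_iff_upper_bounds)
qed

lemma clConv_complex_CO_algebra:
  fixes B :: "('a::topological_space \<Rightarrow> complex) set"
  assumes "complex_CO_algebra B" and A: "A = (\<lambda>b x. Re (b x)) ` B"
    and "compact K" and "C \<ge> 1"
  shows "clConv (lattice_cone A) K =
           {\<omega>. \<forall>a\<in>A. ereal (a \<omega>) \<le> ereal C * (SUP k\<in>K. ereal \<bar>a k\<bar>)}"
    and "clConv (lattice_cone A) K =
           {\<omega>. \<forall>b\<in>B. ereal (cmod (b \<omega>)) \<le> ereal C * (SUP k\<in>K. ereal (cmod (b k)))}"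
proof -
  have cont: "\<forall>f\<in>B. continuous_on UNIV f"
    and add: "\<forall>f\<in>B. \<forall>g\<in>B. (\<lambda>x. f x + g x) \<in> B"
    and mult: "\<forall>f\<in>B. \<forall>g\<in>B. (\<lambda>x. f x * g x) \<in> B"
    and smul: "\<forall>c. \<forall>f\<in>B. (\<lambda>x. c * f x) \<in> B"
    and const: "\<forall>c. (\<lambda>x. c) \<in> B"
    using assms(1) unfolding complex_CO_algebra_def by auto
  note A_closed = Re_image_closed[OF add smul const, folded A]
  have hull_iff: "\<omega> \<in> clConv (lattice_cone A) K \<longleftrightarrow> (\<forall>a\<in>A. \<forall>s. (\<forall>k\<in>K. a k \<le> s) \<longrightarrow> a \<omega> \<le> s)"
    for \<omega> by (simp add: clConv_lattice_cone[OF A_closed] mem_clConv_real_iff)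
  have hull_imp_bounds: "\<forall>a\<in>A. \<forall>M. (\<forall>k\<in>K. \<bar>a k\<bar> \<le> M) \<longrightarrow> a \<omega> \<le> C * M"
    if "\<omega> \<in> clConv (lattice_cone A) K" for \<omega>
    using upper_bounds_of_hull[of A C K \<omega>] A_closed(3) \<open>C \<ge> 1\<close> that hull_iff by blast
  have bounds_imp_dominated: "norm_dominated B K C \<omega>"
    if "\<forall>a\<in>A. \<forall>M. (\<forall>k\<in>K. \<bar>a k\<bar> \<le> M) \<longrightarrow> a \<omega> \<le> C * M" for \<omega>
    using that by (intro norm_dominated_of_Re_upper_bounds[OF smul]) (simp add: A)
  have dominated_imp_hull: "\<omega> \<in> clConv (lattice_cone A) K" if "norm_dominated B K C \<omega>" for \<omega>
    unfolding hull_iff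
  proof (unfold A, intro ballI allI impI, elim imageE)
    fix a s b assume "b \<in> B" and "a = (\<lambda>x. Re (b x))" and "\<forall>k\<in>K. a k \<le> s"
    obtain M where "\<forall>k\<in>K. cmod (b k) \<le> M"
      using continuous_on_compact_bound[OF \<open>compact K\<close>] cont \<open>b \<in> B\<close>
      by (metis continuous_on_subset subset_UNIV)
    moreover have "norm_dominated B K 1 \<omega>"
      using norm_dominated_imp_norm_dominated_1[OF mult _ that] const by blast
    ultimately show "a \<omega> \<le> s"
      using Re_le_of_norm_dominated[OF add const _ \<open>b \<in> B\<close>] \<open>a = (\<lambda>x. Re (b x))\<close>
        \<open>\<forall>k\<in>K. a k \<le> s\<close> by auto
  qed
  show "clConv (lattice_cone A) K =
           {\<omega>. \<forall>a\<in>A. ereal (a \<omega>) \<le> ereal C * (SUP k\<in>K. ereal \<bar>a k\<bar>)}"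
    using hull_imp_bounds bounds_imp_dominated dominated_imp_hull \<open>C \<ge> 1\<close>
    by (auto simp: ereal_le_mult_SUP_iff_upper_bounds)
  show "clConv (lattice_cone A) K =
           {\<omega>. \<forall>b\<in>B. ereal (cmod (b \<omega>)) \<le> ereal C * (SUP k\<in>K. ereal (cmod (b k)))}"
    using hull_imp_bounds bounds_imp_dominated dominated_imp_hull \<open>C \<ge> 1\<close>
    by (auto simp: ereal_le_mult_SUP_iff_upper_bounds norm_dominated_def)
qed

theorem mainTheorem10:
  fixes A :: "('a::topological_space \<Rightarrow> real) set"
  shows
   "(real_CO_algebra A \<longrightarrow>
      (\<forall>K C. compact K \<and> C \<ge> 1 \<longrightarrow>
         clConv (lattice_cone A) K =
           {\<omega>. \<forall>a\<in>A. ereal (a \<omega>) \<le> ereal C * (SUP k\<in>K. ereal \<bar>a k\<bar>)}))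
    \<and>
    (\<forall>B :: ('a \<Rightarrow> complex) set.
       complex_CO_algebra B \<and> A = (\<lambda>b x. Re (b x)) ` B \<longrightarrow>
      (\<forall>K C. compact K \<and> C \<ge> 1 \<longrightarrow>
         clConv (lattice_cone A) K =
           {\<omega>. \<forall>a\<in>A. ereal (a \<omega>) \<le> ereal C * (SUP k\<in>K. ereal \<bar>a k\<bar>)} \<and>
         clConv (lattice_cone A) K =
           {\<omega>. \<forall>b\<in>B. ereal (cmod (b \<omega>)) \<le> ereal C * (SUP k\<in>K. ereal (cmod (b k)))}))"
proof (intro conjI impI allI; elim conjE)
  fix K :: "'a set" and C :: real
  assume "real_CO_algebra A" "compact K" "C \<ge> 1"
  then show "clConv (lattice_cone A) K =
           {\<omega>. \<forall>a\<in>A. ereal (a \<omega>) \<le> ereal C * (SUP k\<in>K. ereal \<bar>a k\<bar>)}"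
    by (rule clConv_real_CO_algebra)
next
  fix B :: "('a \<Rightarrow> complex) set" and K :: "'a set" and C :: real
  assume "complex_CO_algebra B" "A = (\<lambda>b x. Re (b x)) ` B" "compact K" "C \<ge> 1"
  note case_b = clConv_complex_CO_algebra[OF this]
  show "clConv (lattice_cone A) K =
           {\<omega>. \<forall>a\<in>A. ereal (a \<omega>) \<le> ereal C * (SUP k\<in>K. ereal \<bar>a k\<bar>)}"
    by (rule case_b(1))
  show "clConv (lattice_cone A) K =
           {\<omega>. \<forall>b\<in>B. ereal (cmod (b \<omega>)) \<le> ereal C * (SUP k\<in>K. ereal (cmod (b k)))}"
    by (rule case_b(2))
qed

end
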